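(* Let $f:\Gamma\to\Gamma$ be an irreducible, expanding graph map which is a homotopy equivalence. Then each stack $\mathcal{K}$ of $f$ has the form $\mathcal{K}=\{e,f(e),f^2(e),\dots,f^s(e)\}$ (as unoriented edges) for some edge $e$ and some $s\ge0$, where $e,f(e),\dots,f^{s-1}(e)$ are non-mixing and non-surplus and $f^s(e)$ is either mixing or surplus.
   Context: A graph $\Gamma$ is a finite 1-dimensional CW complex (multiple edges and loops allowed) with a chosen orientation on each edge; $\mathcal{E}\Gamma$ is the set of (positively oriented) edges, $\mathcal{E}^\pm\Gamma$ includes both orientations, $\bar e$ is the reverse of $e$, $\iota,\tau$ the endpoint maps. An edge path is a nonempty concatenation $u=e_1\cdots e_k$ with $\tau(e_i)=\iota(e_{i+1})$; $|u|=k$ (no cancellation); $u$ traverses $e$ if $e$ or $\bar e$ occurs in it. A graph map $f:\Gamma\to\Gamma$ consists of a vertex map $f_V$ and an edge path $f(e)$ for each $e\in\mathcal{E}^\pm\Gamma$ with $\iota(f(e))=f_V(\iota(e))$, $f(\bar e)=\overline{f(e)}$; powers are compositions; $f$ is regarded as a continuous map. The transition matrix $T(f)$ has $(i,j)$ entry the number of times $f(e_i)$ traverses $e_j$; $f$ is irreducible if $T(f)$ is an irreducible matrix and every vertex has valence at least $3$; $f$ is expanding if $|f^n(e)|\to\infty$ for every edge $e$. An edge $e\in\mathcal{E}\Gamma$ is mixing if $|f(e)|>1$. It is surplus if it is non-mixing and $f(e)\in\{f(u),\overline{f(u)}\}$ for some edge $u\in\mathcal{E}\Gamma$ with $u\notin\{e,\bar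 e\}$. For a non-mixing edge $e$, $f(e)$ is a single oriented edge, identified with its underlying unoriented edge. The stacks of $f$ are the equivalence classes of the equivalence relation on $\mathcal{E}\Gamma$ generated by $e\sim f(e)$ whenever $e$ is non-mixing and non-surplus. *)

theory Defs
  imports "HOL-Analysis.Analysis"
begin

text \<open>An oriented edge is a pair (e, b): (e, True) is e, (e, False) is its reverse.\<close>

definition graph :: "'v set \<Rightarrow> 'e set \<Rightarrow> ('e \<Rightarrow> 'v) \<Rightarrow> ('e \<Rightarrow> 'v) \<Rightarrow> bool" where
  "graph V E src tgt \<longleftrightarrow> finite V \<and> finite E \<and> (\<forall>e\<in>E. src e \<in> V \<and> tgt e \<in> V)"

type_synonym 'e oedge = "'e \<times> bool"

definition oedges :: "'e set \<Rightarrow> 'e oedge set" where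
  "oedges E = E \<times> UNIV"

fun orev :: "'e oedge \<Rightarrow> 'e oedge" where
  "orev (e, b) = (e, \<not> b)"

fun osrc :: "('e \<Rightarrow> 'v) \<Rightarrow> ('e \<Rightarrow> 'v) \<Rightarrow> 'e oedge \<Rightarrow> 'v" where
  "osrc src tgt (e, b) = (if b then src e else tgt e)"

fun otgt :: "('e \<Rightarrow> 'v) \<Rightarrow> ('e \<Rightarrow> 'v) \<Rightarrow> 'e oedge \<Rightarrow> 'v" where
  "otgt src tgt (e, b) = (if b then tgt e else src e)"

definition rev_path :: "'e oedge list \<Rightarrow> 'e oedge list" where
  "rev_path p = rev (map orev p)"

text \<open>Edge paths: nonempty, consecutive oriented edges of the graph (no cancellation).\<close>
definition edge_path :: "'e set \<Rightarrow> ('e \<Rightarrow> 'v) \<Rightarrow> ('e \<Rightarrow> 'v) \<Rightarrow> 'e oedge list \<Rightarrow> bool" where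
  "edge_path E src tgt p \<longleftrightarrow> p \<noteq> [] \<and> set p \<subseteq> oedges E \<and>
     (\<forall>i. Suc i < length p \<longrightarrow> otgt src tgt (p ! i) = osrc src tgt (p ! Suc i))"

text \<open>Valence of a vertex: number of oriented edges starting at it (loops count twice).\<close>
definition valence :: "'e set \<Rightarrow> ('e \<Rightarrow> 'v) \<Rightarrow> ('e \<Rightarrow> 'v) \<Rightarrow> 'v \<Rightarrow> nat" where
  "valence E src tgt v = card {oe \<in> oedges E. osrc src tgt oe = v}"

text \<open>A graph map is given by a vertex map fV and the edge path fE e for each positively
  oriented edge e; on reversed edges it is defined by f(ebar) = reverse of f(e).\<close>

fun oimg :: "('e \<Rightarrow> 'e oedge list) \<Rightarrow> 'e oedge \<Rightarrow> 'e oedge list" where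
  "oimg fE (e, b) = (if b then fE e else rev_path (fE e))"

definition graph_map ::
  "'v set \<Rightarrow> 'e set \<Rightarrow> ('e \<Rightarrow> 'v) \<Rightarrow> ('e \<Rightarrow> 'v) \<Rightarrow> ('v \<Rightarrow> 'v) \<Rightarrow> ('e \<Rightarrow> 'e oedge list) \<Rightarrow> bool" where
  "graph_map V E src tgt fV fE \<longleftrightarrow>
     (\<forall>v\<in>V. fV v \<in> V) \<and>
     (\<forall>e\<in>E. edge_path E src tgt (fE e) \<and>
             osrc src tgt (hd (fE e)) = fV (src e) \<and>
             otgt src tgt (last (fE e)) = fV (tgt e))"

text \<open>Image of an edge path under f (concatenation, no cancellation).\<close>
definition map_path :: "('e \<Rightarrow> 'e oedge list) \<Rightarrow> 'e oedge list \<Rightarrow> 'e oedge list" where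
  "map_path fE p = concat (map (oimg fE) p)"

fun fpow :: "('e \<Rightarrow> 'e oedge list) \<Rightarrow> nat \<Rightarrow> 'e \<Rightarrow> 'e oedge list" where
  "fpow fE 0 e = [(e, True)]"
| "fpow fE (Suc n) e = map_path fE (fpow fE n e)"

definition trans_mat :: "('e \<Rightarrow> 'e oedge list) \<Rightarrow> 'e \<Rightarrow> 'e \<Rightarrow> nat" where
  "trans_mat fE e e' = length (filter (\<lambda>oe. fst oe = e') (fE e))"

fun mat_pow :: "'e set \<Rightarrow> ('e \<Rightarrow> 'e \<Rightarrow> nat) \<Rightarrow> nat \<Rightarrow> 'e \<Rightarrow> 'e \<Rightarrow> nat" where
  "mat_pow E A 0 i j = (if i = j then 1 else 0)"
| "mat_pow E A (Suc n) i j = (\<Sum>k\<in>E. mat_pow E A n i k * A k j)"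

definition irreducible_matrix :: "'e set \<Rightarrow> ('e \<Rightarrow> 'e \<Rightarrow> nat) \<Rightarrow> bool" where
  "irreducible_matrix E A \<longleftrightarrow> (\<forall>i\<in>E. \<forall>j\<in>E. \<exists>m>0. mat_pow E A m i j > 0)"

definition irreducible_map ::
  "'v set \<Rightarrow> 'e set \<Rightarrow> ('e \<Rightarrow> 'v) \<Rightarrow> ('e \<Rightarrow> 'v) \<Rightarrow> ('e \<Rightarrow> 'e oedge list) \<Rightarrow> bool" where
  "irreducible_map V E src tgt fE \<longleftrightarrow>
     irreducible_matrix E (trans_mat fE) \<and> (\<forall>v\<in>V. valence E src tgt v \<ge> 3)"

definition expanding :: "'e set \<Rightarrow> ('e \<Rightarrow> 'e oedge list) \<Rightarrow> bool" where
  "expanding E fE \<longleftrightarrow> (\<forall>e\<in>E. filterlim (\<lambda>n. length (fpow fE n e)) at_top sequentially)"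

text \<open>Points of the realization: vertices, and interior points (e, t) with 0 < t < 1.\<close>
datatype ('v, 'e) gpoint = Vtx 'v | Inn 'e real

definition gpoints :: "'v set \<Rightarrow> 'e set \<Rightarrow> ('v, 'e) gpoint set" where
  "gpoints V E = Vtx ` V \<union> {Inn e t | e t. e \<in> E \<and> 0 < t \<and> t < 1}"

text \<open>Characteristic map of the closed 1-cell e, parametrised by [0,1].\<close>
definition cell :: "('e \<Rightarrow> 'v) \<Rightarrow> ('e \<Rightarrow> 'v) \<Rightarrow> 'e \<Rightarrow> real \<Rightarrow> ('v, 'e) gpoint" where
  "cell src tgt e t = (if t \<le> 0 then Vtx (src e) else if t \<ge> 1 then Vtx (tgt e) else Inn e t)"

fun ocell :: "('e \<Rightarrow> 'v) \<Rightarrow> ('e \<Rightarrow> 'v) \<Rightarrow> 'e oedge \<Rightarrow> real \<Rightarrow> ('v, 'e) gpoint" where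
  "ocell src tgt (e, b) t = (if b then cell src tgt e t else cell src tgt e (1 - t))"

text \<open>The CW (weak / quotient) topology: U is open iff it is a set of points whose
  preimage under every characteristic map is open in [0,1].\<close>
definition graph_top :: "'v set \<Rightarrow> 'e set \<Rightarrow> ('e \<Rightarrow> 'v) \<Rightarrow> ('e \<Rightarrow> 'v) \<Rightarrow> ('v, 'e) gpoint topology" where
  "graph_top V E src tgt = topology (\<lambda>U. U \<subseteq> gpoints V E \<and>
     (\<forall>e\<in>E. openin (top_of_set {0..1::real}) {t \<in> {0..1}. cell src tgt e t \<in> U}))"

lemma istopology_graph_top: "istopology (\<lambda>U. U \<subseteq> gpoints V E \<and>
     (\<forall>e\<in>E. openin (top_of_set {0..1::real}) {t \<in> {0..1}. cell src tgt e t \<in> U}))"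
  unfolding istopology_def
proof (rule conjI; intro allI impI)
  fix S T :: "('a,'b) gpoint set"
  assume a: "S \<subseteq> gpoints V E \<and> (\<forall>e\<in>E. openin (top_of_set {0..1::real}) {t \<in> {0..1}. cell src tgt e t \<in> S})"
     and b: "T \<subseteq> gpoints V E \<and> (\<forall>e\<in>E. openin (top_of_set {0..1::real}) {t \<in> {0..1}. cell src tgt e t \<in> T})"
  have "\<And>e. {t \<in> {0..1::real}. cell src tgt e t \<in> S \<inter> T} = {t \<in> {0..1}. cell src tgt e t \<in> S} \<inter> {t \<in> {0..1}. cell src tgt e t \<in> T}" by auto
  then show "S \<inter> T \<subseteq> gpoints V E \<and> (\<forall>e\<in>E. openin (top_of_set {0..1::real}) {t \<in> {0..1}. cell src tgt e t \<in> S \<inter> T})"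
    using a b by auto
next
  fix K :: "('a,'b) gpoint set set"
  assume a: "\<forall>S\<in>K. S \<subseteq> gpoints V E \<and> (\<forall>e\<in>E. openin (top_of_set {0..1::real}) {t \<in> {0..1}. cell src tgt e t \<in> S})"
  have "\<And>e. {t \<in> {0..1::real}. cell src tgt e t \<in> \<Union>K} = (\<Union>S\<in>K. {t \<in> {0..1}. cell src tgt e t \<in> S})" by auto
  then show "\<Union>K \<subseteq> gpoints V E \<and> (\<forall>e\<in>E. openin (top_of_set {0..1::real}) {t \<in> {0..1}. cell src tgt e t \<in> \<Union>K})"
    using a by (auto intro!: openin_Union)
qed

lemma openin_graph_top:
  "openin (graph_top V E src tgt) U \<longleftrightarrow> U \<subseteq> gpoints V E \<and>
     (\<forall>e\<in>E. openin (top_of_set {0..1::real}) {t \<in> {0..1}. cell src tgt e t \<in> U})"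
  unfolding graph_top_def using istopology_graph_top[of V E src tgt]
  by (simp add: topology_inverse')

text \<open>The continuous map determined by a graph map: vertices go to their images, and
  the edge e is mapped linearly (at constant speed) along the edge path f(e).\<close>
fun realize :: "('e \<Rightarrow> 'v) \<Rightarrow> ('e \<Rightarrow> 'v) \<Rightarrow> ('v \<Rightarrow> 'v) \<Rightarrow> ('e \<Rightarrow> 'e oedge list) \<Rightarrow>
    ('v, 'e) gpoint \<Rightarrow> ('v, 'e) gpoint" where
  "realize src tgt fV fE (Vtx v) = Vtx (fV v)"
| "realize src tgt fV fE (Inn e t) =
     (let p = fE e; s = real (length p) * t; i = nat \<lfloor>s\<rfloor>
      in ocell src tgt (p ! i) (s - real i))"

definition homotopy_equivalence_map :: "'a topology \<Rightarrow> ('a \<Rightarrow> 'a) \<Rightarrow> bool" where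
  "homotopy_equivalence_map X F \<longleftrightarrow> continuous_map X X F \<and>
     (\<exists>G. continuous_map X X G \<and>
          homotopic_with (\<lambda>_. True) X X (G \<circ> F) id \<and>
          homotopic_with (\<lambda>_. True) X X (F \<circ> G) id)"

definition mixing :: "('e \<Rightarrow> 'e oedge list) \<Rightarrow> 'e \<Rightarrow> bool" where
  "mixing fE e \<longleftrightarrow> length (fE e) > 1"

definition surplus :: "'e set \<Rightarrow> ('e \<Rightarrow> 'e oedge list) \<Rightarrow> 'e \<Rightarrow> bool" where
  "surplus E fE e \<longleftrightarrow> \<not> mixing fE e \<and>
     (\<exists>u\<in>E. u \<noteq> e \<and> (fE e = fE u \<or> fE e = rev_path (fE u)))"

text \<open>For a non-mixing edge e, f(e) is a single oriented edge; its underlying edge.\<close>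
definition img_edge :: "('e \<Rightarrow> 'e oedge list) \<Rightarrow> 'e \<Rightarrow> 'e" where
  "img_edge fE e = fst (hd (fE e))"

definition stack_gen :: "'e set \<Rightarrow> ('e \<Rightarrow> 'e oedge list) \<Rightarrow> 'e rel" where
  "stack_gen E fE = {(e, img_edge fE e) | e. e \<in> E \<and> \<not> mixing fE e \<and> \<not> surplus E fE e}"

definition stack_rel :: "'e set \<Rightarrow> ('e \<Rightarrow> 'e oedge list) \<Rightarrow> 'e rel" where
  "stack_rel E fE = Id_on E \<union> (stack_gen E fE \<union> (stack_gen E fE)\<inverse>)\<^sup>+"

definition stacks :: "'e set \<Rightarrow> ('e \<Rightarrow> 'e oedge list) \<Rightarrow> 'e set set" where
  "stacks E fE = E // stack_rel E fE"

end

theory Submission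
  imports Defs
begin

text \<open>Let D be the set of non-mixing, non-surplus edges and g the map sending a non-mixing
  edge e to the edge f(e). Stacks are the classes of the equivalence relation generated by
  x \<sim> g x for x \<in> D. The map g is injective on D, since two edges of D with the same image
  edge would be surplus, and expansion forces every g-orbit to leave D. A stack therefore
  contains an edge e that is not the image of any edge of D: otherwise the (finite) stack
  would be contained in D and invariant under g. Starting from such an e, the stack is the
  forward orbit of e up to its first exit from D.\<close>

definition step_rel :: "'a set \<Rightarrow> ('a \<Rightarrow> 'a) \<Rightarrow> 'a rel" where
  "step_rel D g = {(x, g x) | x. x \<in> D}"

lemma Image_Id_on_Un_trancl:
  assumes "S \<subseteq> E \<times> E" and "x \<in> E"
  shows "(Id_on E \<union> S\<^sup>+) `` {x} = S\<^sup>* `` {x}"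
  using assms by (auto simp: rtrancl_eq_or_trancl)

lemma finite_closed_set_has_orbit_start:
  assumes "finite K" and x: "x \<in> K"
    and closed: "\<And>z. z \<in> D \<Longrightarrow> z \<in> K \<longleftrightarrow> g z \<in> K"
    and escape: "\<exists>k. (g ^^ k) x \<notin> D"
  shows "\<exists>e\<in>K. e \<notin> g ` D"
proof (rule ccontr)
  assume no_start: "\<not> ?thesis"
  have "K \<subseteq> g ` (K \<inter> D)"
  proof
    fix y
    assume "y \<in> K"
    then obtain z where "z \<in> D" and "y = g z"
      using no_start by blast
    then show "y \<in> g ` (K \<inter> D)"
      using closed \<open>y \<in> K\<close> by blast
  qed
  then have "card K \<le> card (g ` (K \<inter> D))"
    using \<open>finite K\<close> by (intro card_mono) auto
  also have "\<dots> \<le> card (K \<inter> D)"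
    using \<open>finite K\<close> by (intro card_image_le) auto
  finally have "K \<inter> D = K"
    using \<open>finite K\<close> by (intro card_seteq) auto
  then have KD: "K \<subseteq> D"
    by blast
  have "(g ^^ k) x \<in> K" for k
  proof (induction k)
    case (Suc k)
    then show ?case
      using closed[of "(g ^^ k) x"] KD by auto
  qed (use x in simp)
  then show False
    using escape KD by blast
qed

lemma step_rel_orbit_segment:
  assumes inj: "inj_on g D" and start: "e \<notin> g ` D"
    and inside: "\<forall>k<s. (g ^^ k) e \<in> D" and exit: "(g ^^ s) e \<notin> D"
  defines "S \<equiv> step_rel D g \<union> (step_rel D g)\<inverse>"
  shows "S\<^sup>* `` {e} = {(g ^^ k) e | k. k \<le> s}" (is "_ = ?C")
proof
  have "(e, (g ^^ k) e) \<in> S\<^sup>*" if "k \<le> s" for k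
    using that
  proof (induction k)
    case (Suc k)
    then have "((g ^^ k) e, (g ^^ Suc k) e) \<in> S"
      using inside by (auto simp: S_def step_rel_def)
    then show ?case
      using Suc by (auto intro: rtrancl_into_rtrancl)
  qed simp
  then show "?C \<subseteq> S\<^sup>* `` {e}"
    by auto
next
  have closed: "z \<in> ?C" if "y \<in> ?C" and "(y, z) \<in> S" for y z
  proof -
    obtain k where k: "k \<le> s" "y = (g ^^ k) e"
      using \<open>y \<in> ?C\<close> by auto
    from \<open>(y, z) \<in> S\<close> consider "y \<in> D" "z = g y" | "z \<in> D" "y = g z"
      by (auto simp: S_def step_rel_def)
    then show ?thesis
    proof cases
      case 1
      then have "k < s"
        using k exit le_neq_implies_less by blast
      then show ?thesis
        using 1 k by (auto intro!: exI[of _ "Suc k"])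
    next
      case 2
      then obtain j where j: "k = Suc j"
        using k start by (cases k) auto
      then have "(g ^^ j) e \<in> D" and "g ((g ^^ j) e) = g z"
        using inside k 2 by auto
      then have "z = (g ^^ j) e"
        using inj \<open>z \<in> D\<close> by (auto dest: inj_onD)
      then show ?thesis
        using k j by auto
    qed
  qed
  show "S\<^sup>* `` {e} \<subseteq> ?C"
  proof
    fix z
    assume "z \<in> S\<^sup>* `` {e}"
    then have "(e, z) \<in> S\<^sup>*"
      by simp
    then show "z \<in> ?C"
    proof (induction rule: rtrancl_induct)
      case base
      show ?case
        by (auto intro!: exI[of _ 0])
    next
      case (step y z)
      then show ?case
        using closed by blast
    qed
  qed
qed

theorem quotient_step_rel_orbit_segment:
  assumes "finite E" and "D \<subseteq> E" and "g ` D \<subseteq> E" and "inj_on g D"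
    and escape: "\<And>x. x \<in> E \<Longrightarrow> \<exists>k. (g ^^ k) x \<notin> D"
    and "K \<in> E // (Id_on E \<union> (step_rel D g \<union> (step_rel D g)\<inverse>)\<^sup>+)"
  shows "\<exists>e \<in> E - g ` D. \<exists>s. (\<forall>k<s. (g ^^ k) e \<in> D) \<and> (g ^^ s) e \<in> E - D \<and>
           K = {(g ^^ k) e | k. k \<le> s}"
proof -
  define S where "S = step_rel D g \<union> (step_rel D g)\<inverse>"
  have SE: "S \<subseteq> E \<times> E"
    using assms(2,3) by (auto simp: S_def step_rel_def)
  obtain x where x: "x \<in> E" and Kx: "K = (Id_on E \<union> S\<^sup>+) `` {x}"
    using assms(6) unfolding S_def by (blast elim: quotientE)
  have "Id_on E \<union> S\<^sup>+ \<subseteq> E \<times> E"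
    using trancl_subset_Sigma[OF SE] by blast
  then have KE: "K \<subseteq> E"
    unfolding Kx by blast
  have K: "K = S\<^sup>* `` {x}"
    using Kx Image_Id_on_Un_trancl[OF SE x] by simp
  have "sym S"
    by (auto simp: S_def sym_def)
  have closed: "z \<in> K \<longleftrightarrow> g z \<in> K" if "z \<in> D" for z
  proof -
    have "(z, g z) \<in> S" and "(g z, z) \<in> S"
      using that by (auto simp: S_def step_rel_def)
    then show ?thesis
      unfolding K by (blast intro: rtrancl_into_rtrancl)
  qed
  have "finite K"
    using finite_subset[OF KE assms(1)] .
  moreover have "x \<in> K"
    unfolding K by simp
  ultimately obtain e where "e \<in> K" and start: "e \<notin> g ` D"
    using finite_closed_set_has_orbit_start[OF _ _ closed escape[OF x]] by blast
  have "(x, e) \<in> S\<^sup>*"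
    using \<open>e \<in> K\<close> unfolding K by simp
  moreover have "(e, x) \<in> S\<^sup>*"
    using calculation symD[OF sym_rtrancl[OF \<open>sym S\<close>]] by blast
  ultimately have Ke: "K = S\<^sup>* `` {e}"
    unfolding K by (blast intro: rtrancl_trans)
  have "e \<in> E"
    using \<open>e \<in> K\<close> KE by blast
  define s where "s = (LEAST s. (g ^^ s) e \<notin> D)"
  have exit: "(g ^^ s) e \<notin> D"
    unfolding s_def using escape[OF \<open>e \<in> E\<close>] by (rule LeastI_ex)
  have inside: "\<forall>k<s. (g ^^ k) e \<in> D"
    unfolding s_def using not_less_Least by blast
  have segment: "K = {(g ^^ k) e | k. k \<le> s}"
    using step_rel_orbit_segment[OF assms(4) start inside exit] Ke unfolding S_def by simp
  moreover have "(g ^^ s) e \<in> E"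
    using segment KE by blast
  ultimately show ?thesis
    using \<open>e \<in> E\<close> start inside exit by (intro bexI[of _ e] exI[of _ s]) simp_all
qed

lemma img_edge_in_edges:
  assumes "graph_map V E src tgt fV fE" and "e \<in> E"
  shows "img_edge fE e \<in> E"
proof -
  have "fE e \<noteq> []" and "set (fE e) \<subseteq> oedges E"
    using assms by (auto simp: graph_map_def edge_path_def)
  then have "hd (fE e) \<in> oedges E"
    by auto
  then show ?thesis
    by (auto simp: img_edge_def oedges_def)
qed

lemma non_mixing_length:
  assumes "graph_map V E src tgt fV fE" and "e \<in> E" and "\<not> mixing fE e"
  shows "length (fE e) = 1"
proof -
  have "fE e \<noteq> []"
    using assms by (auto simp: graph_map_def edge_path_def)
  then show ?thesis
    using assms(3) by (cases "fE e") (auto simp: mixing_def)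
qed

definition stacking_edges :: "'e set \<Rightarrow> ('e \<Rightarrow> 'e oedge list) \<Rightarrow> 'e set" where
  "stacking_edges E fE = {e \<in> E. \<not> mixing fE e \<and> \<not> surplus E fE e}"

lemma inj_on_img_edge_stacking_edges:
  assumes "graph_map V E src tgt fV fE"
  shows "inj_on (img_edge fE) (stacking_edges E fE)"
proof (rule inj_onI, rule ccontr)
  fix y z
  assume y: "y \<in> stacking_edges E fE" and z: "z \<in> stacking_edges E fE"
    and same: "img_edge fE y = img_edge fE z" and "y \<noteq> z"
  have "length (fE y) = 1" and "length (fE z) = 1"
    using y z non_mixing_length[OF assms] by (auto simp: stacking_edges_def)
  then obtain a b where a: "fE y = [a]" and b: "fE z = [b]"
    by (auto simp: length_Suc_conv simp del: split_paired_Ex)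
  have "fst a = fst b"
    using same a b by (simp add: img_edge_def)
  then have "fE y = fE z \<or> fE y = rev_path (fE z)"
    using a b by (cases a; cases b) (auto simp: rev_path_def)
  then have "surplus E fE y"
    using y z \<open>y \<noteq> z\<close> by (auto simp: surplus_def stacking_edges_def)
  then show False
    using y by (simp add: stacking_edges_def)
qed

lemma fpow_single_edge_chain:
  assumes "\<And>k. k < n \<Longrightarrow> length (fE ((img_edge fE ^^ k) e)) = 1"
  shows "\<exists>b. fpow fE n e = [((img_edge fE ^^ n) e, b)]"
  using assms
proof (induction n)
  case (Suc n)
  then obtain b where b: "fpow fE n e = [((img_edge fE ^^ n) e, b)]"
    by auto
  obtain c where c: "fE ((img_edge fE ^^ n) e) = [c]"
    using Suc.prems[of n] by (auto simp: length_Suc_conv simp del: split_paired_Ex)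
  have "fpow fE (Suc n) e = [(fst c, if b then snd c else \<not> snd c)]"
    using b c by (cases c) (auto simp: map_path_def rev_path_def)
  moreover have "img_edge fE ((img_edge fE ^^ n) e) = fst c"
    using c img_edge_def[of fE "(img_edge fE ^^ n) e"] by simp
  ultimately show ?case
    by auto
qed auto

lemma expanding_img_edge_orbit_not_single:
  assumes "expanding E fE" and "e \<in> E"
  shows "\<exists>k. length (fE ((img_edge fE ^^ k) e)) \<noteq> 1"
proof (rule ccontr)
  assume "\<not> ?thesis"
  then have "length (fpow fE n e) = 1" for n
    using fpow_single_edge_chain[of n fE e] by auto
  moreover have "filterlim (\<lambda>n. length (fpow fE n e)) at_top sequentially"
    using assms by (simp add: expanding_def)
  then obtain n where "length (fpow fE n e) \<ge> 2"
    by (auto simp: filterlim_at_top eventually_sequentially)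
  ultimately show False
    by simp
qed

lemma stacks_eq_quotient_step_rel:
  fixes E :: "'e set" and fE :: "'e \<Rightarrow> 'e oedge list"
  defines "S \<equiv> step_rel (stacking_edges E fE) (img_edge fE)"
  shows "stacks E fE = E // (Id_on E \<union> (S \<union> S\<inverse>)\<^sup>+)"
proof -
  have "stack_gen E fE = S"
    by (auto simp: S_def stack_gen_def step_rel_def stacking_edges_def)
  then show ?thesis
    by (simp add: stacks_def stack_rel_def)
qed

theorem lemma3p1:
  fixes V :: "'v set" and E :: "'e set" and src tgt :: "'e \<Rightarrow> 'v"
    and fV :: "'v \<Rightarrow> 'v" and fE :: "'e \<Rightarrow> 'e oedge list"
  assumes "graph V E src tgt"
    and "graph_map V E src tgt fV fE"
    and "irreducible_map V E src tgt fE"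
    and "expanding E fE"
    and "homotopy_equivalence_map (graph_top V E src tgt) (realize src tgt fV fE)"
    and "K \<in> stacks E fE"
  shows "\<exists>e\<in>E. \<exists>s::nat.
           (\<forall>k\<le>s. length (fpow fE k e) = 1) \<and>
           K = {fst (hd (fpow fE k e)) | k. k \<le> s} \<and>
           (\<forall>k<s. \<not> mixing fE (fst (hd (fpow fE k e))) \<and>
                   \<not> surplus E fE (fst (hd (fpow fE k e)))) \<and>
           (mixing fE (fst (hd (fpow fE s e))) \<or> surplus E fE (fst (hd (fpow fE s e))))"
proof -
  let ?D = "stacking_edges E fE" and ?g = "img_edge fE"
  have single: "length (fE x) = 1" if "x \<in> ?D" for x
    using that non_mixing_length[OF assms(2)] by (simp add: stacking_edges_def)
  have escape: "\<exists>k. (?g ^^ k) x \<notin> ?D" if "x \<in> E" for x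
    using expanding_img_edge_orbit_not_single[OF assms(4) that] single by blast
  have "finite E"
    using assms(1) by (simp add: graph_def)
  moreover have "?D \<subseteq> E" and "?g ` ?D \<subseteq> E"
    using img_edge_in_edges[OF assms(2)] by (auto simp: stacking_edges_def)
  ultimately obtain e s where "e \<in> E" and inside: "\<forall>k<s. (?g ^^ k) e \<in> ?D"
    and exit: "(?g ^^ s) e \<in> E - ?D" and K: "K = {(?g ^^ k) e | k. k \<le> s}"
    using quotient_step_rel_orbit_segment[OF _ _ _ inj_on_img_edge_stacking_edges[OF assms(2)]
        escape] assms(6)
    unfolding stacks_eq_quotient_step_rel by blast
  have "\<exists>b. fpow fE k e = [((?g ^^ k) e, b)]" if "k \<le> s" for k
    using fpow_single_edge_chain single inside that by (meson less_le_trans)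
  then have fpow: "length (fpow fE k e) = 1" "fst (hd (fpow fE k e)) = (?g ^^ k) e"
    if "k \<le> s" for k
    using that by force+
  have "K = {fst (hd (fpow fE k e)) | k. k \<le> s}"
    unfolding K using fpow(2) by force
  then show ?thesis
    using \<open>e \<in> E\<close> inside exit fpow
    by (intro bexI[of _ e] exI[of _ s]) (auto simp: stacking_edges_def)
qed

end
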